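(* Let $q\in[0,1)$. A $\mathbb C^{n\times m}$-valued function $T$ analytic at the origin is $R_q$-cyclic if and only if there exist $N\in\mathbb N_0$ and matrices $(C_q,A_q,B_q)\in\mathbb C^{n\times N}\times\mathbb C^{N\times N}\times\mathbb C^{N\times m}$ such that, in a neighbourhood of the origin, \[ T(z)=C_q\prod_{j=0}^\infty\bigl(I_N-(1-q)zq^jA_q\bigr)^{-1}B_q . \]
   Context: For $q\in(0,1)$, $(R_qf)(z)=\frac{f(z)-f(qz)}{(1-q)z}$ (the $q$-Jackson derivative); $R_0$ is the backward shift $(R_0f)(z)=\frac{f(z)-f(0)}{z}$, $(R_0f)(0)=f'(0)$; these act entrywise. A matrix-valued function $T$ analytic at the origin is called $R_q$-cyclic if the linear span of the columns of the functions $R_q^\ell T$, $\ell=0,1,2,\ldots$, is finite dimensional. Convention $q^0=1$. *)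

theory Defs
  imports "HOL-Analysis.Analysis" "HOL-Library.Function_Algebras"
    "Jordan_Normal_Form.Gauss_Jordan_Elimination"
begin

text \<open>The q-Jackson derivative for q in (0,1) and the backward shift for q = 0,
  unified: away from 0 it is (f z - f (q z)) / ((1-q) z); at 0 it is f'(0).\<close>
definition Rq :: "real \<Rightarrow> (complex \<Rightarrow> complex) \<Rightarrow> complex \<Rightarrow> complex" where
  "Rq q f z = (if z = 0 then deriv f 0
               else (f z - f (of_real q * z)) / (of_real (1 - q) * z))"

definition Rq_mat :: "real \<Rightarrow> nat \<Rightarrow> nat \<Rightarrow> (complex \<Rightarrow> complex mat) \<Rightarrow> complex \<Rightarrow> complex mat" where
  "Rq_mat q n m T = (\<lambda>z. mat n m (\<lambda>(i, j). Rq q (\<lambda>w. T w $$ (i, j)) z))"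

definition fscale :: "complex \<Rightarrow> (complex \<Rightarrow> nat \<Rightarrow> complex) \<Rightarrow> (complex \<Rightarrow> nat \<Rightarrow> complex)" where
  "fscale c f = (\<lambda>z i. c * f z i)"

text \<open>The j-th column of the function S, seen as a C^n-valued function on the ball
  of radius r around 0 (the domain of T).\<close>
definition col_fun :: "real \<Rightarrow> nat \<Rightarrow> (complex \<Rightarrow> complex mat) \<Rightarrow> nat \<Rightarrow> complex \<Rightarrow> nat \<Rightarrow> complex" where
  "col_fun r n S j = (\<lambda>z i. if z \<in> ball 0 r \<and> i < n then S z $$ (i, j) else 0)"

text \<open>R_q-cyclicity of an n x m matrix-valued function T defined (analytic) on ball 0 r:
  the linear span of all columns of R_q^l T, l = 0,1,2,..., is finite dimensional,
  i.e. is contained in the span of a finite set.\<close>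
definition Rq_cyclic :: "real \<Rightarrow> real \<Rightarrow> nat \<Rightarrow> nat \<Rightarrow> (complex \<Rightarrow> complex mat) \<Rightarrow> bool" where
  "Rq_cyclic q r n m T =
     (\<exists>F. finite F \<and>
        {col_fun r n (((Rq_mat q n m) ^^ l) T) j | l j. j < m} \<subseteq> module.span fscale F)"

definition minv :: "complex mat \<Rightarrow> complex mat" where
  "minv F = the (mat_inverse F)"

definition qfactor :: "real \<Rightarrow> nat \<Rightarrow> complex mat \<Rightarrow> complex \<Rightarrow> nat \<Rightarrow> complex mat" where
  "qfactor q N A z j = 1\<^sub>m N - (of_real (1 - q) * z * of_real q ^ j) \<cdot>\<^sub>m A"

definition qpartial :: "real \<Rightarrow> nat \<Rightarrow> complex mat \<Rightarrow> complex \<Rightarrow> nat \<Rightarrow> complex mat" where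
  "qpartial q N A z k = foldr (\<lambda>j P. minv (qfactor q N A z j) * P) [0..<k] (1\<^sub>m N)"

definition qprod_converges_to :: "real \<Rightarrow> nat \<Rightarrow> complex mat \<Rightarrow> complex \<Rightarrow> complex mat \<Rightarrow> bool" where
  "qprod_converges_to q N A z P =
     (P \<in> carrier_mat N N \<and> (\<forall>j. invertible_mat (qfactor q N A z j)) \<and>
      (\<forall>i<N. \<forall>l<N. (\<lambda>k. qpartial q N A z k $$ (i, l)) \<longlonglongrightarrow> P $$ (i, l)))"

end

theory Submission
  imports Defs "HOL-Complex_Analysis.Conformal_Mappings" "Jordan_Normal_Form.Determinant"
begin

text \<open>
  If the columns of all \<open>R\<^sub>q\<^sup>l T\<close> span a finite-dimensional space, pick a basis
  \<open>g\<^sub>1, \<dots>, g\<^sub>N\<close> of it; \<open>R\<^sub>q\<close> acts on the span by a matrix \<open>A\<close>, which says exactly that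
  \<open>G(z) = (g\<^sub>1(z) \<dots> g\<^sub>N(z))\<close> satisfies \<open>G(qz) = G(z) (I - (1-q) z A)\<close>. Iterating gives
  \<open>G(z) = G(q\<^sup>k z) \<Prod>\<^bsub>j<k\<^esub> (I - (1-q) z q\<^sup>j A)\<^sup>-\<^sup>1\<close>, and letting \<open>k \<rightarrow> \<infinity>\<close> gives
  \<open>G(z) = G(0) P(z)\<close> with \<open>P\<close> the infinite product, so \<open>T = G B = G(0) P B\<close>.
  Conversely \<open>P(qz) = (I - (1-q) z A) P(z)\<close>, whence \<open>R\<^sub>q\<^sup>l T = C A\<^sup>l P B\<close> near 0 (at 0 by
  continuity); these columns lie in a fixed finite-dimensional space near 0, and by the identity
  theorem the columns on the whole disc do as well. The factors of the product are perturbations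
  of \<open>I\<close> of size \<open>O(q\<^sup>j)\<close>, which gives its convergence.
\<close>

lemma mat_mult_entry:
  assumes "A \<in> carrier_mat a b" "B \<in> carrier_mat b c" "i < a" "j < c"
  shows "(A * B) $$ (i, j) = (\<Sum>k<b. A $$ (i, k) * B $$ (k, j))"
  using assms by (auto simp: scalar_prod_def atLeast0LessThan intro!: sum.cong)

lemma mat_mult3_entry:
  fixes C M X :: "'a :: comm_semiring_0 mat"
  assumes C: "C \<in> carrier_mat n N" and M: "M \<in> carrier_mat N N" and X: "X \<in> carrier_mat N m"
    and ij: "i < n" "j < m"
  shows "(C * M * X) $$ (i, j) = (\<Sum>a<N. \<Sum>b<N. M $$ (a, b) * (C $$ (i, a) * X $$ (b, j)))"
proof -
  have "(C * M * X) $$ (i, j) = (\<Sum>a<N. C $$ (i, a) * (M * X) $$ (a, j))"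
    using assoc_mult_mat[OF C M X] mat_mult_entry[OF C _ ij, of "M * X"] M X by simp
  also have "\<dots> = (\<Sum>a<N. C $$ (i, a) * (\<Sum>b<N. M $$ (a, b) * X $$ (b, j)))"
    using mat_mult_entry[OF M X _ ij(2)] by simp
  also have "\<dots> = (\<Sum>a<N. \<Sum>b<N. M $$ (a, b) * (C $$ (i, a) * X $$ (b, j)))"
    by (simp add: sum_distrib_left mult_ac)
  finally show ?thesis .
qed

lemma mat_mult_entry_tendsto:
  fixes C B L :: "complex mat" and P :: "'a \<Rightarrow> complex mat"
  assumes C: "C \<in> carrier_mat n N" and B: "B \<in> carrier_mat N m" and L: "L \<in> carrier_mat N N"
    and P: "eventually (\<lambda>z. P z \<in> carrier_mat N N) F"
    and lim: "\<And>a b. a < N \<Longrightarrow> b < N \<Longrightarrow> ((\<lambda>z. P z $$ (a, b)) \<longlongrightarrow> L $$ (a, b)) F"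
    and ij: "i < n" "j < m"
  shows "((\<lambda>z. (C * P z * B) $$ (i, j)) \<longlongrightarrow> (C * L * B) $$ (i, j)) F"
proof -
  have "((\<lambda>z. \<Sum>a<N. \<Sum>b<N. P z $$ (a, b) * (C $$ (i, a) * B $$ (b, j))) \<longlongrightarrow>
      (\<Sum>a<N. \<Sum>b<N. L $$ (a, b) * (C $$ (i, a) * B $$ (b, j)))) F"
    by (auto intro!: tendsto_sum tendsto_mult_right lim)
  moreover have "eventually (\<lambda>z. (\<Sum>a<N. \<Sum>b<N. P z $$ (a, b) * (C $$ (i, a) * B $$ (b, j))) =
      (C * P z * B) $$ (i, j)) F"
    using P by eventually_elim (simp add: mat_mult3_entry[OF C _ B ij])
  ultimately show ?thesis using mat_mult3_entry[OF C L B ij] by (simp add: tendsto_cong)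
qed

lemma mat_minus_eqD:
  fixes X Y Z :: "'a :: ab_group_add mat"
  assumes "X - Y = Z" "X \<in> carrier_mat a b" "Y \<in> carrier_mat a b"
  shows "X - Z = Y"
proof (rule eq_matI)
  fix i j assume ij: "i < dim_row Y" "j < dim_col Y"
  have Z: "Z \<in> carrier_mat a b" unfolding assms(1)[symmetric] using assms(2,3) by (simp add: minus_carrier_mat)
  have "Z $$ (i, j) = (X - Y) $$ (i, j)" by (simp only: assms(1))
  then show "(X - Z) $$ (i, j) = Y $$ (i, j)" using assms(2,3) Z ij by simp
qed (use assms(2,3) in \<open>auto simp flip: assms(1)\<close>)

text \<open>In this norm \<open>1\<^sub>m N\<close> has norm \<open>N\<close>; this is where the factors \<open>N\<close> in the
  estimates below come from.\<close>
definition entry_norm :: "complex mat \<Rightarrow> real" where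
  "entry_norm X = (\<Sum>i<dim_row X. \<Sum>j<dim_col X. cmod (X $$ (i, j)))"

lemma entry_norm_nonneg: "entry_norm X \<ge> 0"
  unfolding entry_norm_def by (intro sum_nonneg) auto

lemma norm_entry_le_entry_norm:
  assumes "i < dim_row X" "j < dim_col X"
  shows "cmod (X $$ (i, j)) \<le> entry_norm X"
proof -
  have "cmod (X $$ (i, j)) \<le> (\<Sum>j<dim_col X. cmod (X $$ (i, j)))"
    using assms by (intro member_le_sum) auto
  also have "\<dots> \<le> entry_norm X"
    unfolding entry_norm_def using assms
    by (intro member_le_sum[where f = "\<lambda>i. \<Sum>j<dim_col X. cmod (X $$ (i, j))"])
       (auto intro: sum_nonneg)
  finally show ?thesis .
qed

lemma entry_norm_add:
  assumes "X \<in> carrier_mat a b" "Y \<in> carrier_mat a b"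
  shows "entry_norm (X + Y) \<le> entry_norm X + entry_norm Y"
  using assms unfolding entry_norm_def
  by (auto simp: sum.distrib[symmetric] intro!: sum_mono norm_triangle_ineq)

lemma entry_norm_smult: "entry_norm (c \<cdot>\<^sub>m X) = cmod c * entry_norm X"
  unfolding entry_norm_def by (auto simp: sum_distrib_left norm_mult intro!: sum.cong)

lemma entry_norm_one: "entry_norm (1\<^sub>m N) = real N"
proof -
  have "(\<Sum>j<N. cmod (1\<^sub>m N $$ (i, j))) = 1" if "i < N" for i
  proof -
    have "(\<Sum>j<N. cmod (1\<^sub>m N $$ (i, j))) = (\<Sum>j<N. if i = j then 1 else 0)"
      using that by (intro sum.cong) auto
    also have "\<dots> = 1" using that by (simp add: sum.delta)
    finally show ?thesis .
  qed
  then show ?thesis unfolding entry_norm_def by simp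
qed

lemma entry_norm_mult:
  assumes X: "X \<in> carrier_mat a b" and Y: "Y \<in> carrier_mat b c"
  shows "entry_norm (X * Y) \<le> entry_norm X * entry_norm Y"
proof -
  have row_Y: "(\<Sum>j<c. cmod (Y $$ (k, j))) \<le> entry_norm Y" if "k < b" for k
    using that Y unfolding entry_norm_def
    by (auto intro!: member_le_sum[where f = "\<lambda>i. \<Sum>j<c. cmod (Y $$ (i, j))"] sum_nonneg)
  have "entry_norm (X * Y) = (\<Sum>i<a. \<Sum>j<c. cmod (\<Sum>k<b. X $$ (i, k) * Y $$ (k, j)))"
    unfolding entry_norm_def using X Y
    by (auto simp: mat_mult_entry[OF X Y] simp del: index_mult_mat(1) intro!: sum.cong)
  also have "\<dots> \<le> (\<Sum>i<a. \<Sum>j<c. \<Sum>k<b. cmod (X $$ (i, k)) * cmod (Y $$ (k, j)))"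
    by (intro sum_mono) (auto intro: order.trans[OF norm_sum] simp: norm_mult)
  also have "\<dots> = (\<Sum>i<a. \<Sum>k<b. cmod (X $$ (i, k)) * (\<Sum>j<c. cmod (Y $$ (k, j))))"
    by (simp add: sum.swap[of _ "{..<c}"] sum_distrib_left)
  also have "\<dots> \<le> (\<Sum>i<a. \<Sum>k<b. cmod (X $$ (i, k)) * entry_norm Y)"
    by (intro sum_mono mult_left_mono row_Y) auto
  also have "\<dots> = entry_norm X * entry_norm Y"
    unfolding entry_norm_def using X by (simp add: sum_distrib_right)
  finally show ?thesis .
qed

lemma minv_correct:
  assumes A: "A \<in> carrier_mat N N" and det: "Determinant.det A \<noteq> 0"
  shows "minv A \<in> carrier_mat N N" "A * minv A = 1\<^sub>m N" "minv A * A = 1\<^sub>m N"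
proof -
  have "A \<in> Units (ring_mat TYPE(complex) N ())" by (rule det_non_zero_imp_unit[OF A det])
  then obtain B where B: "mat_inverse A = Some B"
    using mat_inverse(1)[OF A, of "()"] by (cases "mat_inverse A") auto
  then show "minv A \<in> carrier_mat N N" "A * minv A = 1\<^sub>m N" "minv A * A = 1\<^sub>m N"
    using mat_inverse(2)[OF A B] by (auto simp: minv_def)
qed

lemma minv_commute:
  assumes F: "F \<in> carrier_mat N N" "Determinant.det F \<noteq> 0"
    and X: "X \<in> carrier_mat N N" and comm: "X * F = F * X"
  shows "X * minv F = minv F * X"
proof -
  note M = minv_correct[OF F]
  have "X * minv F = (minv F * F) * X * minv F" using M X by simp
  also have "\<dots> = minv F * (X * F) * minv F"
    using assoc_mult_mat[OF M(1) F(1) X] comm by simp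
  also have "\<dots> = minv F * X * (F * minv F)"
    using M(1) F(1) X by (simp add: assoc_mult_mat[of _ N N _ N _ N])
  also have "\<dots> = minv F * X" using M X by simp
  finally show ?thesis .
qed

lemma one_minus_smult_mult:
  fixes A X :: "'a :: comm_ring_1 mat"
  assumes "A \<in> carrier_mat N N" "X \<in> carrier_mat N k"
  shows "(1\<^sub>m N - c \<cdot>\<^sub>m A) * X = X - c \<cdot>\<^sub>m (A * X)"
  using assms by (simp add: minus_mult_distrib_mat[of "1\<^sub>m N" N N "c \<cdot>\<^sub>m A" X k] mult_smult_assoc_mat)

lemma mult_one_minus_smult:
  fixes A X :: "'a :: comm_ring_1 mat"
  assumes "A \<in> carrier_mat N N" "X \<in> carrier_mat k N"
  shows "X * (1\<^sub>m N - c \<cdot>\<^sub>m A) = X - c \<cdot>\<^sub>m (X * A)"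
  using assms by (simp add: mult_minus_distrib_mat[of X k N "1\<^sub>m N" N "c \<cdot>\<^sub>m A"] mult_smult_distrib)

lemma det_one_minus_small_neq_0:
  assumes A: "A \<in> carrier_mat N N" and small: "cmod c * entry_norm A < 1"
  shows "Determinant.det (1\<^sub>m N - c \<cdot>\<^sub>m A) \<noteq> 0"
proof
  assume "Determinant.det (1\<^sub>m N - c \<cdot>\<^sub>m A) = 0"
  then obtain v where v: "v \<in> carrier_vec N" "v \<noteq> 0\<^sub>v N" "(1\<^sub>m N - c \<cdot>\<^sub>m A) *\<^sub>v v = 0\<^sub>v N"
    using det_0_iff_vec_prod_zero[of "1\<^sub>m N - c \<cdot>\<^sub>m A" N] A by (auto simp: minus_carrier_mat)
  define X where "X = mat N 1 (\<lambda>(i, _). v $ i)"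
  have X: "X \<in> carrier_mat N 1" by (simp add: X_def)
  have col_X: "col X 0 = v" using v(1) by (auto simp: X_def)
  have "(1\<^sub>m N - c \<cdot>\<^sub>m A) * X = 0\<^sub>m N 1"
  proof (rule eq_matI)
    fix i j assume ij: "i < dim_row (0\<^sub>m N 1 :: complex mat)" "j < dim_col (0\<^sub>m N 1 :: complex mat)"
    have "((1\<^sub>m N - c \<cdot>\<^sub>m A) *\<^sub>v v) $ i = 0" using v(3) ij by simp
    then show "((1\<^sub>m N - c \<cdot>\<^sub>m A) * X) $$ (i, j) = 0\<^sub>m N 1 $$ (i, j)"
      using A X ij by (simp add: col_X)
  qed (use A X in auto)
  then have "X - c \<cdot>\<^sub>m (A * X) = 0\<^sub>m N 1" by (simp only: one_minus_smult_mult[OF A X])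
  then have "X - 0\<^sub>m N 1 = c \<cdot>\<^sub>m (A * X)"
    by (rule mat_minus_eqD[of _ _ _ N 1]) (use A X in auto)
  moreover have "X - 0\<^sub>m N 1 = X" using X by (intro eq_matI) auto
  ultimately have fixed: "X = c \<cdot>\<^sub>m (A * X)" by simp
  have "entry_norm X = cmod c * entry_norm (A * X)" by (subst fixed) (simp add: entry_norm_smult)
  also have "\<dots> \<le> cmod c * (entry_norm A * entry_norm X)"
    by (intro mult_left_mono entry_norm_mult[OF A X]) auto
  finally have "entry_norm X \<le> cmod c * entry_norm A * entry_norm X" by (simp add: mult.assoc)
  then have "entry_norm X = 0"
    using small entry_norm_nonneg[of X] by (metis mult_less_cancel_right2 not_le order_antisym)
  then have "v $ i = 0" if "i < N" for i
    using norm_entry_le_entry_norm[of i X 0] X that by (simp add: X_def)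
  then show False using v(1,2) by (auto intro!: eq_vecI)
qed

lemma inverse_one_minus_small:
  assumes A: "A \<in> carrier_mat N N" and small: "cmod c * entry_norm A \<le> 1/2"
  defines "F \<equiv> 1\<^sub>m N - c \<cdot>\<^sub>m A"
  shows "F \<in> carrier_mat N N" "Determinant.det F \<noteq> 0"
    "minv F \<in> carrier_mat N N" "F * minv F = 1\<^sub>m N" "minv F * F = 1\<^sub>m N"
    "entry_norm (minv F - 1\<^sub>m N) \<le> 2 * real N * cmod c * entry_norm A"
proof -
  show F: "F \<in> carrier_mat N N" and det: "Determinant.det F \<noteq> 0"
    using A det_one_minus_small_neq_0[OF A] small by (auto simp: F_def)
  note M = minv_correct[OF F det]
  show "minv F \<in> carrier_mat N N" "F * minv F = 1\<^sub>m N" "minv F * F = 1\<^sub>m N" using M by auto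
  define D where "D = minv F - 1\<^sub>m N"
  have "minv F - c \<cdot>\<^sub>m (A * minv F) = 1\<^sub>m N"
    using M(2) one_minus_smult_mult[OF A M(1)] by (simp add: F_def)
  then have D_eq: "D = c \<cdot>\<^sub>m (A * minv F)"
    unfolding D_def by (rule mat_minus_eqD[of _ _ _ N N]) (use A M(1) in auto)
  have "entry_norm D = cmod c * entry_norm (A * minv F)" by (simp add: D_eq entry_norm_smult)
  also have "\<dots> \<le> cmod c * (entry_norm A * entry_norm (minv F))"
    by (intro mult_left_mono entry_norm_mult[OF A M(1)]) auto
  finally have norm_D: "entry_norm D \<le> cmod c * entry_norm A * entry_norm (minv F)"
    by (simp add: mult.assoc)
  have "minv F = 1\<^sub>m N + D" using M(1) by (intro eq_matI) (auto simp: D_def)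
  then have "entry_norm (minv F) \<le> real N + entry_norm D"
    using entry_norm_add[of "1\<^sub>m N" N N D] M(1) by (simp add: D_def entry_norm_one minus_carrier_mat)
  also have "\<dots> \<le> real N + 1/2 * entry_norm (minv F)"
    using norm_D mult_right_mono[OF small entry_norm_nonneg[of "minv F"]] by simp
  finally have "entry_norm (minv F) \<le> 2 * real N" by simp
  then have "entry_norm D \<le> cmod c * entry_norm A * (2 * real N)"
    using norm_D by (smt (verit) entry_norm_nonneg mult_left_mono norm_ge_zero zero_le_mult_iff)
  then show "entry_norm (minv F - 1\<^sub>m N) \<le> 2 * real N * cmod c * entry_norm A"
    by (simp add: D_def ac_simps)
qed

lemma mat_product_bounded:
  fixes Q E :: "nat \<Rightarrow> complex mat"
  assumes Q: "\<And>k. Q k \<in> carrier_mat N N" and E: "\<And>k. E k \<in> carrier_mat N N"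
    and step: "\<And>k. Q (Suc k) = Q k * (1\<^sub>m N + E k)"
    and bound: "\<And>k. entry_norm (E k) \<le> e k" and summable: "summable e"
  shows "entry_norm (Q k) \<le> entry_norm (Q 0) * exp (suminf e)"
proof -
  have e_nonneg: "e k \<ge> 0" for k using bound[of k] entry_norm_nonneg[of "E k"] by simp
  have "entry_norm (Q k) \<le> entry_norm (Q 0) * exp (\<Sum>j<k. e j)"
  proof (induction k)
    case (Suc k)
    have "Q (Suc k) = Q k + Q k * E k"
      using Q[of k] E[of k] by (simp add: step mult_add_distrib_mat[OF Q[of k] one_carrier_mat E[of k]])
    then have "entry_norm (Q (Suc k)) \<le> entry_norm (Q k) + entry_norm (Q k) * e k"
      using entry_norm_add[of "Q k" N N "Q k * E k"] entry_norm_mult[OF Q[of k] E[of k]]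
        mult_left_mono[OF bound[of k] entry_norm_nonneg[of "Q k"]] Q[of k] E[of k] by simp
    also have "\<dots> = entry_norm (Q k) * (1 + e k)" by (simp add: algebra_simps)
    also have "\<dots> \<le> entry_norm (Q 0) * exp (\<Sum>j<k. e j) * exp (e k)"
      using Suc e_nonneg[of k] entry_norm_nonneg[of "Q k"] exp_ge_add_one_self[of "e k"]
      by (intro mult_mono) (auto simp: add.commute)
    finally show ?case by (simp add: exp_add mult.assoc)
  qed simp
  also have "\<dots> \<le> entry_norm (Q 0) * exp (suminf e)"
    using sum_le_suminf[OF summable, of "{..<k}"] e_nonneg entry_norm_nonneg[of "Q 0"]
    by (intro mult_left_mono) auto
  finally show ?thesis .
qed

lemma mat_product_increment_le:
  fixes Q E :: "nat \<Rightarrow> complex mat"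
  assumes Q: "\<And>k. Q k \<in> carrier_mat N N" and E: "\<And>k. E k \<in> carrier_mat N N"
    and step: "\<And>k. Q (Suc k) = Q k * (1\<^sub>m N + E k)"
    and bound: "\<And>k. entry_norm (E k) \<le> e k" and summable: "summable e"
    and il: "i < N" "l < N"
  shows "cmod (Q (Suc j) $$ (i, l) - Q j $$ (i, l)) \<le> entry_norm (Q 0) * exp (suminf e) * e j"
proof -
  have "Q (Suc j) - Q j = Q j * E j"
    using Q[of j] E[of j] by (intro eq_matI) (auto simp: step mult_add_distrib_mat[OF Q[of j] one_carrier_mat E[of j]])
  moreover have "cmod (Q (Suc j) $$ (i, l) - Q j $$ (i, l)) = cmod ((Q (Suc j) - Q j) $$ (i, l))"
    using il Q[of j] Q[of "Suc j"] by simp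
  moreover have "\<dots> \<le> entry_norm (Q (Suc j) - Q j)"
    by (rule norm_entry_le_entry_norm) (use il Q[of j] in auto)
  ultimately have "cmod (Q (Suc j) $$ (i, l) - Q j $$ (i, l)) \<le> entry_norm (Q j * E j)" by simp
  also have "\<dots> \<le> entry_norm (Q j) * entry_norm (E j)" by (rule entry_norm_mult[OF Q E])
  also have "\<dots> \<le> entry_norm (Q 0) * exp (suminf e) * e j"
    using mat_product_bounded[OF Q E step bound summable, of j] bound[of j] entry_norm_nonneg
    by (intro mult_mono) auto
  finally show ?thesis .
qed

lemma mat_product_converges:
  fixes Q E :: "nat \<Rightarrow> complex mat"
  assumes Q: "\<And>k. Q k \<in> carrier_mat N N" and E: "\<And>k. E k \<in> carrier_mat N N"
    and step: "\<And>k. Q (Suc k) = Q k * (1\<^sub>m N + E k)"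
    and bound: "\<And>k. entry_norm (E k) \<le> e k" and summable: "summable e"
  obtains P where "P \<in> carrier_mat N N" "\<And>i l. i < N \<Longrightarrow> l < N \<Longrightarrow> (\<lambda>k. Q k $$ (i, l)) \<longlonglongrightarrow> P $$ (i, l)"
    "\<And>i l. i < N \<Longrightarrow> l < N \<Longrightarrow>
       cmod (P $$ (i, l) - Q 0 $$ (i, l)) \<le> entry_norm (Q 0) * exp (suminf e) * suminf e"
proof -
  define M where "M = entry_norm (Q 0) * exp (suminf e)"
  have M_nonneg: "M \<ge> 0" unfolding M_def using entry_norm_nonneg by simp
  have e_nonneg: "e k \<ge> 0" for k using bound[of k] entry_norm_nonneg[of "E k"] by simp
  have increment: "cmod (Q (Suc j) $$ (i, l) - Q j $$ (i, l)) \<le> M * e j" if "i < N" "l < N" for i l j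
    unfolding M_def by (rule mat_product_increment_le[OF Q E step bound summable that])
  have telescope: "Q k $$ (i, l) = Q 0 $$ (i, l) + (\<Sum>j<k. Q (Suc j) $$ (i, l) - Q j $$ (i, l))" for k i l
    using sum_lessThan_telescope[of "\<lambda>j. Q j $$ (i, l)" k] by simp
  have summable_increments: "summable (\<lambda>j. Q (Suc j) $$ (i, l) - Q j $$ (i, l))" if "i < N" "l < N" for i l
    by (rule summable_norm_cancel, rule summable_comparison_test[where g = "\<lambda>j. M * e j"])
       (use increment[OF that] summable in \<open>auto intro: summable_mult\<close>)
  define P where "P = mat N N (\<lambda>(i, l). Q 0 $$ (i, l) + (\<Sum>j. Q (Suc j) $$ (i, l) - Q j $$ (i, l)))"
  have lim: "(\<lambda>k. Q k $$ (i, l)) \<longlonglongrightarrow> P $$ (i, l)" if "i < N" "l < N" for i l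
  proof -
    have "(\<lambda>k. Q 0 $$ (i, l) + (\<Sum>j<k. Q (Suc j) $$ (i, l) - Q j $$ (i, l))) \<longlonglongrightarrow> P $$ (i, l)"
      unfolding P_def using that by (simp, intro tendsto_add tendsto_const summable_LIMSEQ summable_increments)
    then show ?thesis by (subst (asm) telescope[symmetric])
  qed
  have "cmod (P $$ (i, l) - Q 0 $$ (i, l)) \<le> M * suminf e" if "i < N" "l < N" for i l
  proof (rule LIMSEQ_le_const2)
    show "(\<lambda>k. cmod (Q k $$ (i, l) - Q 0 $$ (i, l))) \<longlonglongrightarrow> cmod (P $$ (i, l) - Q 0 $$ (i, l))"
      by (intro tendsto_norm tendsto_diff lim that tendsto_const)
    have "cmod (Q k $$ (i, l) - Q 0 $$ (i, l)) \<le> M * suminf e" for k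
    proof -
      have "cmod (Q k $$ (i, l) - Q 0 $$ (i, l)) \<le> (\<Sum>j<k. M * e j)"
        by (subst telescope[of k]) (simp, rule order.trans[OF norm_sum sum_mono[OF increment[OF that]]])
      also have "\<dots> \<le> M * suminf e" unfolding sum_distrib_left[symmetric]
        using M_nonneg summable e_nonneg by (intro mult_left_mono sum_le_suminf) auto
      finally show ?thesis .
    qed
    then show "\<exists>N. \<forall>k\<ge>N. cmod (Q k $$ (i, l) - Q 0 $$ (i, l)) \<le> M * suminf e" by blast
  qed
  then show ?thesis using that[of P] lim by (auto simp: M_def P_def)
qed

lemma foldr_mat_mult_carrier:
  assumes "\<And>j. j \<in> set xs \<Longrightarrow> g j \<in> carrier_mat N N" "X \<in> carrier_mat N N"
  shows "foldr (\<lambda>j P. g j * P) xs X \<in> carrier_mat N N"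
  using assms by (induction xs) (auto intro!: mult_carrier_mat)

lemma foldr_mat_mult_right:
  fixes g :: "nat \<Rightarrow> 'a :: semiring_1 mat"
  assumes "\<And>j. j \<in> set xs \<Longrightarrow> g j \<in> carrier_mat N N" "X \<in> carrier_mat N N"
  shows "foldr (\<lambda>j P. g j * P) xs X = foldr (\<lambda>j P. g j * P) xs (1\<^sub>m N) * X"
  using assms
proof (induction xs)
  case (Cons a xs)
  have "foldr (\<lambda>j P. g j * P) xs (1\<^sub>m N) \<in> carrier_mat N N"
    by (rule foldr_mat_mult_carrier) (use Cons.prems in auto)
  then show ?case using Cons by (simp add: assoc_mult_mat[of _ N N _ N X N])
qed simp

lemma qpartial_carrier:
  assumes "\<And>j. j < k \<Longrightarrow> minv (qfactor q N A z j) \<in> carrier_mat N N"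
  shows "qpartial q N A z k \<in> carrier_mat N N"
  unfolding qpartial_def by (rule foldr_mat_mult_carrier) (use assms in auto)

lemma qpartial_Suc_right:
  assumes "\<And>j. j \<le> k \<Longrightarrow> minv (qfactor q N A z j) \<in> carrier_mat N N"
  shows "qpartial q N A z (Suc k) = qpartial q N A z k * minv (qfactor q N A z k)"
  unfolding qpartial_def using assms[of k]
  by (simp, subst foldr_mat_mult_right) (use assms in auto)

lemma qfactor_Suc: "qfactor q N A z (Suc j) = qfactor q N A (of_real q * z) j"
  unfolding qfactor_def by (simp add: ac_simps)

lemma qpartial_Suc_left:
  "qpartial q N A z (Suc k) = minv (qfactor q N A z 0) * qpartial q N A (of_real q * z) k"
proof -
  have "[0..<Suc k] = 0 # map Suc [0..<k]" by (simp add: map_Suc_upt upt_conv_Cons)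
  then show ?thesis unfolding qpartial_def by (simp add: foldr_map o_def qfactor_Suc)
qed

lemma norm_of_real_mult_le: "0 \<le> q \<Longrightarrow> q \<le> 1 \<Longrightarrow> cmod (of_real q * z) \<le> cmod z"
  by (simp add: norm_mult mult_left_le_one_le)

lemma of_real_mult_in_ball:
  assumes "z \<in> ball 0 r" "0 \<le> q" "q \<le> 1"
  shows "of_real q * z \<in> ball (0::complex) r"
  using norm_of_real_mult_le[of q z] assms by auto

lemma norm_qfactor_coeff_le:
  assumes "0 \<le> q" "q < 1"
  shows "cmod (of_real (1 - q) * z * of_real q ^ j) \<le> cmod z * q ^ j"
proof -
  have "cmod (of_real (1 - q) * z * of_real q ^ j) = \<bar>1 - q\<bar> * cmod z * \<bar>q\<bar> ^ j"
    by (simp only: norm_mult norm_power norm_of_real)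
  also have "\<dots> = (1 - q) * (cmod z * q ^ j)" using assms by simp
  also have "\<dots> \<le> cmod z * q ^ j" using assms by (intro mult_left_le_one_le) auto
  finally show ?thesis .
qed

lemma small_of_real_mult:
  assumes "0 \<le> q" "q \<le> 1" "cmod z * entry_norm A \<le> 1/2"
  shows "cmod (of_real q * z) * entry_norm A \<le> 1/2"
  using norm_of_real_mult_le[of q z] assms entry_norm_nonneg[of A] by (meson mult_right_mono order.trans)

lemma qfactor_inverse:
  assumes A: "A \<in> carrier_mat N N" and q: "0 \<le> q" "q < 1"
    and small: "cmod z * entry_norm A \<le> 1/2"
  shows "qfactor q N A z j \<in> carrier_mat N N" "Determinant.det (qfactor q N A z j) \<noteq> 0"
    "minv (qfactor q N A z j) \<in> carrier_mat N N"
    "qfactor q N A z j * minv (qfactor q N A z j) = 1\<^sub>m N"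
    "minv (qfactor q N A z j) * qfactor q N A z j = 1\<^sub>m N"
    "entry_norm (minv (qfactor q N A z j) - 1\<^sub>m N) \<le> 2 * real N * cmod z * entry_norm A * q ^ j"
proof -
  let ?c = "of_real (1 - q) * z * of_real q ^ j"
  have coeff: "cmod ?c \<le> cmod z * q ^ j" by (rule norm_qfactor_coeff_le[OF q])
  also have "\<dots> \<le> cmod z" using q by (simp add: mult_left_le power_le_one)
  finally have "cmod ?c * entry_norm A \<le> 1/2"
    using small entry_norm_nonneg[of A] by (meson mult_right_mono order.trans)
  note inv = inverse_one_minus_small[OF A this, folded qfactor_def]
  show "qfactor q N A z j \<in> carrier_mat N N" "Determinant.det (qfactor q N A z j) \<noteq> 0"
    "minv (qfactor q N A z j) \<in> carrier_mat N N"
    "qfactor q N A z j * minv (qfactor q N A z j) = 1\<^sub>m N"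
    "minv (qfactor q N A z j) * qfactor q N A z j = 1\<^sub>m N"
    using inv(1-5) by auto
  have "2 * real N * cmod ?c * entry_norm A \<le> 2 * real N * (cmod z * q ^ j) * entry_norm A"
    using coeff entry_norm_nonneg[of A] by (intro mult_right_mono mult_left_mono) auto
  then show "entry_norm (minv (qfactor q N A z j) - 1\<^sub>m N) \<le> 2 * real N * cmod z * entry_norm A * q ^ j"
    using inv(6) by (simp add: ac_simps)
qed

lemma qprod_converges_to_near_one:
  assumes A: "A \<in> carrier_mat N N" and q: "0 \<le> q" "q < 1"
    and small: "cmod z * entry_norm A \<le> 1/2"
  defines "s \<equiv> 2 * real N * cmod z * entry_norm A / (1 - q)"
  obtains P where "qprod_converges_to q N A z P"
    "\<And>i l. i < N \<Longrightarrow> l < N \<Longrightarrow> cmod (P $$ (i, l) - 1\<^sub>m N $$ (i, l)) \<le> real N * exp s * s"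
proof -
  note inv = qfactor_inverse[OF A q small]
  define e where "e j = 2 * real N * cmod z * entry_norm A * q ^ j" for j
  have summable: "summable e" unfolding e_def using q by (intro summable_mult summable_geometric) auto
  have sum_e: "suminf e = s"
    unfolding e_def s_def using q by (simp add: suminf_mult suminf_geometric)
  have partial: "qpartial q N A z k \<in> carrier_mat N N" for k
    by (rule qpartial_carrier) (use inv(3) in auto)
  have step: "qpartial q N A z (Suc k) = qpartial q N A z k * (1\<^sub>m N + (minv (qfactor q N A z k) - 1\<^sub>m N))" for k
  proof -
    have "1\<^sub>m N + (minv (qfactor q N A z k) - 1\<^sub>m N) = minv (qfactor q N A z k)"
      using inv(3)[of k] by (intro eq_matI) auto
    then show ?thesis using qpartial_Suc_right[of k q N A z] inv(3) by simp
  qed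
  have bound: "entry_norm (minv (qfactor q N A z k) - 1\<^sub>m N) \<le> e k" for k
    using inv(6) by (simp add: e_def)
  have E: "minv (qfactor q N A z k) - 1\<^sub>m N \<in> carrier_mat N N" for k
    using inv(3) by (simp add: minus_carrier_mat)
  obtain P where P: "P \<in> carrier_mat N N"
    "\<And>i l. i < N \<Longrightarrow> l < N \<Longrightarrow> (\<lambda>k. qpartial q N A z k $$ (i, l)) \<longlonglongrightarrow> P $$ (i, l)"
    "\<And>i l. i < N \<Longrightarrow> l < N \<Longrightarrow> cmod (P $$ (i, l) - qpartial q N A z 0 $$ (i, l)) \<le>
       entry_norm (qpartial q N A z 0) * exp (suminf e) * suminf e"
    using mat_product_converges[OF partial E step bound summable] by blast
  have "qpartial q N A z 0 = 1\<^sub>m N" by (simp add: qpartial_def)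
  note P = P[unfolded this entry_norm_one sum_e]
  have "invertible_mat (qfactor q N A z j)" for j
    using inv(1)[of j] inv(3)[of j] inv(4)[of j] inv(5)[of j]
    unfolding invertible_mat_def inverts_mat_def by auto
  then show ?thesis using that[of P] P unfolding qprod_converges_to_def by blast
qed

lemma qprod_converges_to_unique:
  assumes "qprod_converges_to q N A z P" "qprod_converges_to q N A z P'"
  shows "P = P'"
proof (rule eq_matI)
  fix i l assume "i < dim_row P'" "l < dim_col P'"
  then have "(\<lambda>k. qpartial q N A z k $$ (i, l)) \<longlonglongrightarrow> P $$ (i, l)"
    "(\<lambda>k. qpartial q N A z k $$ (i, l)) \<longlonglongrightarrow> P' $$ (i, l)"
    using assms unfolding qprod_converges_to_def by auto
  then show "P $$ (i, l) = P' $$ (i, l)" by (rule LIMSEQ_unique)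
qed (use assms in \<open>auto simp: qprod_converges_to_def\<close>)

text \<open>The value of the infinite product; it is unspecified where the product does not converge.\<close>
definition qprod :: "real \<Rightarrow> nat \<Rightarrow> complex mat \<Rightarrow> complex \<Rightarrow> complex mat" where
  "qprod q N A z = (SOME P. qprod_converges_to q N A z P)"

lemma qprod_eqI: "qprod_converges_to q N A z P \<Longrightarrow> qprod q N A z = P"
  unfolding qprod_def by (rule qprod_converges_to_unique) (rule someI)

lemma qprod_converges:
  assumes "A \<in> carrier_mat N N" "0 \<le> q" "q < 1" "cmod z * entry_norm A \<le> 1/2"
  shows "qprod_converges_to q N A z (qprod q N A z)"
  by (rule qprod_converges_to_near_one[OF assms]) (simp add: qprod_eqI)

lemma qprod_carrier:
  assumes "A \<in> carrier_mat N N" "0 \<le> q" "q < 1" "cmod z * entry_norm A \<le> 1/2"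
  shows "qprod q N A z \<in> carrier_mat N N"
  using qprod_converges[OF assms] by (simp add: qprod_converges_to_def)

lemma qprod_scaled:
  assumes A: "A \<in> carrier_mat N N" and q: "0 \<le> q" "q < 1"
    and small: "cmod z * entry_norm A \<le> 1/2"
  shows "qprod q N A (of_real q * z) = qfactor q N A z 0 * qprod q N A z"
proof -
  have small_qz: "cmod (of_real q * z) * entry_norm A \<le> 1/2"
    using small_of_real_mult[OF q(1) _ small] q(2) by simp
  note inv = qfactor_inverse[OF A q small, of 0]
  define P where "P = qprod q N A z"
  define P' where "P' = qprod q N A (of_real q * z)"
  have P: "P \<in> carrier_mat N N" and P': "P' \<in> carrier_mat N N"
    using qprod_carrier[OF A q small] qprod_carrier[OF A q small_qz] by (simp_all add: P_def P'_def)
  have "P = minv (qfactor q N A z 0) * P'"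
  proof (rule eq_matI)
    fix i l assume "i < dim_row (minv (qfactor q N A z 0) * P')" "l < dim_col (minv (qfactor q N A z 0) * P')"
    then have il: "i < N" "l < N" using inv(3) P' by auto
    have partial: "qpartial q N A (of_real q * z) k \<in> carrier_mat N N" for k
      by (rule qpartial_carrier) (use qfactor_inverse(3)[OF A q small_qz] in auto)
    have "(\<lambda>k. qpartial q N A z (Suc k) $$ (i, l)) \<longlonglongrightarrow> P $$ (i, l)"
      using qprod_converges[OF A q small] il
      unfolding qprod_converges_to_def P_def by (auto intro: LIMSEQ_Suc)
    moreover have "(\<lambda>k. qpartial q N A z (Suc k) $$ (i, l)) =
        (\<lambda>k. \<Sum>a<N. minv (qfactor q N A z 0) $$ (i, a) * qpartial q N A (of_real q * z) k $$ (a, l))"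
      by (rule ext, subst qpartial_Suc_left, rule mat_mult_entry[OF inv(3) partial il])
    moreover have "(\<lambda>k. \<Sum>a<N. minv (qfactor q N A z 0) $$ (i, a) * qpartial q N A (of_real q * z) k $$ (a, l))
        \<longlonglongrightarrow> (\<Sum>a<N. minv (qfactor q N A z 0) $$ (i, a) * P' $$ (a, l))"
      using qprod_converges[OF A q small_qz] il unfolding qprod_converges_to_def P'_def
      by (auto intro!: tendsto_sum tendsto_mult tendsto_const)
    ultimately show "P $$ (i, l) = (minv (qfactor q N A z 0) * P') $$ (i, l)"
      using mat_mult_entry[OF inv(3) P' il] LIMSEQ_unique by metis
  qed (use inv(3) P P' in auto)
  then have "qfactor q N A z 0 * P = (qfactor q N A z 0 * minv (qfactor q N A z 0)) * P'"
    using assoc_mult_mat[OF inv(1) inv(3) P'] by simp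
  then show ?thesis using inv(4) P' by (simp add: P_def P'_def)
qed

lemma small_ball_exists:
  assumes "r > 0"
  obtains e where "0 < e" "e \<le> r" "\<And>z. z \<in> ball 0 e \<Longrightarrow> cmod z * entry_norm A \<le> 1/2"
proof
  define a where "a = entry_norm A"
  have a: "a \<ge> 0" by (simp add: a_def entry_norm_nonneg)
  show "0 < min r (1 / (2 * (a + 1)))" "min r (1 / (2 * (a + 1))) \<le> r" using assms a by auto
  fix z :: complex assume "z \<in> ball 0 (min r (1 / (2 * (a + 1))))"
  then have "cmod z * a \<le> 1 / (2 * (a + 1)) * a" using a by (intro mult_right_mono) auto
  also have "\<dots> \<le> 1/2" using a by (simp add: field_simps)
  finally show "cmod z * entry_norm A \<le> 1/2" by (simp add: a_def)
qed

lemma qprod_zero: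
  assumes A: "A \<in> carrier_mat N N" and q: "0 \<le> q" "q < 1"
  shows "qprod q N A 0 = 1\<^sub>m N"
proof -
  obtain P where P: "qprod_converges_to q N A 0 P"
    "\<And>i l. i < N \<Longrightarrow> l < N \<Longrightarrow> cmod (P $$ (i, l) - 1\<^sub>m N $$ (i, l)) \<le> 0"
    using qprod_converges_to_near_one[OF A q, of 0] by auto
  have "P = 1\<^sub>m N"
    using P(1) by (intro eq_matI) (use P(2) in \<open>auto simp: qprod_converges_to_def\<close>)
  then show ?thesis using qprod_eqI[OF P(1)] by simp
qed

lemma qprod_tendsto_one:
  assumes A: "A \<in> carrier_mat N N" and q: "0 \<le> q" "q < 1" and il: "i < N" "l < N"
  shows "((\<lambda>z. qprod q N A z $$ (i, l)) \<longlongrightarrow> 1\<^sub>m N $$ (i, l)) (at 0)"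
proof -
  obtain e where e: "0 < e" "\<And>z. z \<in> ball 0 e \<Longrightarrow> cmod z * entry_norm A \<le> 1/2"
    using small_ball_exists[of 1 A] by auto
  define s where "s z = 2 * real N * cmod z * entry_norm A / (1 - q)" for z :: complex
  have bound: "cmod (qprod q N A z $$ (i, l) - 1\<^sub>m N $$ (i, l)) \<le> real N * exp (s z) * s z"
    if "z \<in> ball 0 e" for z
    using qprod_converges_to_near_one[OF A q e(2)[OF that]] qprod_eqI il by (metis s_def)
  have "((\<lambda>z. real N * exp (s z) * s z) \<longlongrightarrow> real N * exp (s 0) * s 0) (at 0)"
    unfolding s_def using q by (intro tendsto_intros) auto
  then have "((\<lambda>z. real N * exp (s z) * s z) \<longlongrightarrow> 0) (at 0)" by (simp add: s_def)
  then have "((\<lambda>z. qprod q N A z $$ (i, l) - 1\<^sub>m N $$ (i, l)) \<longlongrightarrow> 0) (at 0)"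
    by (rule Lim_null_comparison[rotated])
       (use eventually_at_ball[OF e(1), of "0::complex" UNIV] bound in \<open>auto elim!: eventually_mono\<close>)
  then show ?thesis by (rule LIM_zero_cancel)
qed

lemma qprod_mult_tendsto:
  assumes C: "C \<in> carrier_mat n N" and A: "A \<in> carrier_mat N N" and B: "B \<in> carrier_mat N m"
    and q: "0 \<le> q" "q < 1" and ij: "i < n" "j < m"
  shows "((\<lambda>w. (C * qprod q N A w * B) $$ (i, j)) \<longlongrightarrow> (C * qprod q N A 0 * B) $$ (i, j)) (at 0)"
proof -
  obtain e where e: "0 < e" "\<And>z. z \<in> ball 0 e \<Longrightarrow> cmod z * entry_norm A \<le> 1/2"
    using small_ball_exists[of 1 A] by auto
  have "eventually (\<lambda>w. qprod q N A w \<in> carrier_mat N N) (at 0)"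
    using eventually_at_ball[OF e(1), of "0::complex" UNIV] qprod_carrier[OF A q e(2)]
    by (auto elim!: eventually_mono)
  then show ?thesis unfolding qprod_zero[OF A q]
    by (intro mat_mult_entry_tendsto[OF C B _ _ qprod_tendsto_one[OF A q] ij]) auto
qed

lemma qfactor_commute:
  assumes A: "A \<in> carrier_mat N N" and X: "X \<in> carrier_mat N N" and comm: "X * A = A * X"
  shows "X * qfactor q N A z j = qfactor q N A z j * X"
proof -
  define c where "c = of_real (1 - q) * z * of_real q ^ j"
  have "X * (1\<^sub>m N - c \<cdot>\<^sub>m A) = X - c \<cdot>\<^sub>m (A * X)"
    using mult_one_minus_smult[OF A X] comm by simp
  also have "\<dots> = (1\<^sub>m N - c \<cdot>\<^sub>m A) * X" by (rule one_minus_smult_mult[OF A X, symmetric])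
  finally show ?thesis by (simp add: qfactor_def c_def)
qed

lemma qpartial_commute:
  assumes A: "A \<in> carrier_mat N N" and q: "0 \<le> q" "q < 1"
    and small: "cmod z * entry_norm A \<le> 1/2"
  shows "qpartial q N A z k * A = A * qpartial q N A z k"
  using small
proof (induction k arbitrary: z)
  case (Suc k)
  let ?M = "minv (qfactor q N A z 0)" and ?Q = "qpartial q N A (of_real q * z) k"
  have small_qz: "cmod (of_real q * z) * entry_norm A \<le> 1/2"
    using small_of_real_mult[OF q(1) _ Suc.prems] q(2) by simp
  note inv = qfactor_inverse[OF A q Suc.prems, of 0]
  have Q: "?Q \<in> carrier_mat N N"
    by (rule qpartial_carrier) (use qfactor_inverse(3)[OF A q small_qz] in auto)
  have MA: "A * ?M = ?M * A"
    by (rule minv_commute[OF inv(1,2) A qfactor_commute[OF A A refl]])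
  have "?M * ?Q * A = ?M * (A * ?Q)"
    using assoc_mult_mat[OF inv(3) Q A] Suc.IH[OF small_qz] by simp
  also have "\<dots> = (A * ?M) * ?Q" using assoc_mult_mat[OF inv(3) A Q] MA by simp
  also have "\<dots> = A * (?M * ?Q)" by (rule assoc_mult_mat[OF A inv(3) Q])
  finally have "?M * ?Q * A = A * (?M * ?Q)" .
  then show ?case by (simp add: qpartial_Suc_left)
qed (use A in \<open>simp add: qpartial_def\<close>)

lemma qdifference_iterate:
  assumes A: "A \<in> carrier_mat N N" and q: "0 \<le> q" "q < 1"
    and small: "\<And>z. z \<in> ball 0 e \<Longrightarrow> cmod z * entry_norm A \<le> 1/2"
    and G: "\<And>z. G z \<in> carrier_mat n N"
    and eq: "\<And>z. z \<in> ball 0 e \<Longrightarrow> G (of_real q * z) = G z * qfactor q N A z 0"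
    and z: "z \<in> ball 0 e"
  shows "G z = G (of_real q ^ k * z) * qpartial q N A z k"
  using z
proof (induction k arbitrary: z)
  case 0
  then show ?case using G[of z] by (simp add: qpartial_def)
next
  case (Suc k)
  let ?F = "qfactor q N A z 0" and ?Q = "qpartial q N A (of_real q * z) k"
  have qz: "of_real q * z \<in> ball 0 e" using of_real_mult_in_ball[OF Suc.prems] q by simp
  note inv = qfactor_inverse[OF A q small[OF Suc.prems], of 0]
  have Q: "?Q \<in> carrier_mat N N"
    by (rule qpartial_carrier) (use qfactor_inverse(3)[OF A q small[OF qz]] in auto)
  have "G z = G (of_real q * z) * minv ?F"
    using eq[OF Suc.prems] assoc_mult_mat[OF G[of z] inv(1,3)] inv(4) G[of z] by simp
  also have "\<dots> = G (of_real q ^ Suc k * z) * ?Q * minv ?F"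
    using Suc.IH[OF qz] by (simp add: mult.assoc mult.left_commute)
  also have "\<dots> = G (of_real q ^ Suc k * z) * (minv ?F * ?Q)"
    using G Q inv(3) minv_commute[OF inv(1,2) Q qfactor_commute[OF A Q qpartial_commute[OF A q small[OF qz]]]]
    by (simp add: assoc_mult_mat[of _ n N _ N _ N])
  finally show ?case by (simp add: qpartial_Suc_left)
qed

lemma qdifference_solution:
  assumes A: "A \<in> carrier_mat N N" and q: "0 \<le> q" "q < 1"
    and small: "\<And>z. z \<in> ball 0 e \<Longrightarrow> cmod z * entry_norm A \<le> 1/2"
    and G: "\<And>z. G z \<in> carrier_mat n N"
    and eq: "\<And>z. z \<in> ball 0 e \<Longrightarrow> G (of_real q * z) = G z * qfactor q N A z 0"
    and cont: "\<And>i a. i < n \<Longrightarrow> a < N \<Longrightarrow> isCont (\<lambda>w. G w $$ (i, a)) 0"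
    and z: "z \<in> ball 0 e"
  shows "G z = G 0 * qprod q N A z"
proof -
  note P = qprod_converges[OF A q small[OF z]]
  have P_carrier: "qprod q N A z \<in> carrier_mat N N" using P by (simp add: qprod_converges_to_def)
  have Q: "qpartial q N A z k \<in> carrier_mat N N" for k
    by (rule qpartial_carrier) (use qfactor_inverse(3)[OF A q small[OF z]] in auto)
  have to_0: "(\<lambda>k. of_real q ^ k * z) \<longlonglongrightarrow> 0"
    using q by (intro tendsto_mult_left_zero LIMSEQ_power_zero) auto
  have G_lim: "(\<lambda>k. G (of_real q ^ k * z) $$ (i, a)) \<longlonglongrightarrow> G 0 $$ (i, a)" if "i < n" "a < N" for i a
    using isCont_tendsto_compose[OF cont[OF that] to_0] by simp
  show ?thesis
  proof (rule eq_matI)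
    fix i l assume "i < dim_row (G 0 * qprod q N A z)" "l < dim_col (G 0 * qprod q N A z)"
    then have il: "i < n" "l < N" using G[of 0] P_carrier by auto
    have "(\<lambda>k. (G (of_real q ^ k * z) * qpartial q N A z k) $$ (i, l))
        \<longlonglongrightarrow> (\<Sum>a<N. G 0 $$ (i, a) * qprod q N A z $$ (a, l))"
      unfolding mat_mult_entry[OF G Q il]
      using P il G_lim unfolding qprod_converges_to_def by (auto intro!: tendsto_sum tendsto_mult)
    moreover have "(G (of_real q ^ k * z) * qpartial q N A z k) $$ (i, l) = G z $$ (i, l)" for k
      using qdifference_iterate[OF A q small G eq z] by simp
    ultimately show "G z $$ (i, l) = (G 0 * qprod q N A z) $$ (i, l)"
      using mat_mult_entry[OF G P_carrier il] by (simp add: LIMSEQ_const_iff)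
  qed (use G[of z] G[of 0] P_carrier in auto)
qed

lemma isCont_eq_limit_at:
  fixes f g :: "'a :: {t2_space, perfect_space} \<Rightarrow> 'b :: t2_space"
  assumes "isCont f x" "(g \<longlongrightarrow> g x) (at x)" "eventually (\<lambda>w. f w = g w) (at x)"
  shows "f x = g x"
proof -
  have "(g \<longlongrightarrow> f x) (at x)" using assms(1,3) by (simp add: isCont_def tendsto_cong)
  then show ?thesis using assms(2) tendsto_unique[OF at_neq_bot] by blast
qed

lemma holomorphic_on_of_real_mult:
  assumes "f holomorphic_on ball 0 r" "0 \<le> q" "q \<le> 1"
  shows "(\<lambda>z. f (of_real q * z)) holomorphic_on ball 0 r"
proof -
  have "(f \<circ> (\<lambda>z. of_real q * z)) holomorphic_on ball 0 r"
    by (rule holomorphic_on_compose_gen[where t = "ball 0 r"])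
       (use of_real_mult_in_ball assms in \<open>auto intro: holomorphic_intros\<close>)
  then show ?thesis by (simp add: o_def)
qed

lemma Rq_holomorphic:
  assumes f: "f holomorphic_on ball 0 r" and q: "0 \<le> q" "q < 1" and r: "r > 0"
  shows "Rq q f holomorphic_on ball 0 r"
proof -
  define h where "h z = f z - f (of_real q * z)" for z
  have h: "h holomorphic_on ball 0 r"
    unfolding h_def using q by (intro holomorphic_intros f holomorphic_on_of_real_mult) auto
  have "(f has_field_derivative deriv f 0) (at 0)"
    using r by (intro holomorphic_derivI[OF f open_ball]) auto
  then have "(h has_field_derivative deriv f 0 - deriv f 0 * of_real q) (at 0)"
    unfolding h_def
    by (intro DERIV_diff DERIV_chain2[of f, where g = "\<lambda>z. of_real q * z"]) (auto intro!: derivative_eq_intros)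
  then have deriv_h: "deriv h 0 = (1 - of_real q) * deriv f 0"
    by (simp add: DERIV_imp_deriv algebra_simps)
  have nz: "1 - complex_of_real q \<noteq> 0"
    using q by (metis of_real_1 of_real_eq_iff eq_iff_diff_eq_0 less_irrefl)
  define H where "H z = (if z = 0 then deriv h 0 else (h z - h 0) / (z - 0))" for z
  have "H holomorphic_on ball 0 r" unfolding H_def using pole_lemma_open[OF h open_ball, of 0] by simp
  then have "(\<lambda>z. H z / (1 - of_real q)) holomorphic_on ball 0 r"
    by (intro holomorphic_intros) (use nz in auto)
  moreover have "H z / (1 - of_real q) = Rq q f z" for z
    using nz by (cases "z = 0") (auto simp: H_def Rq_def h_def deriv_h field_simps)
  ultimately show ?thesis by simp
qed

lemma Rq_cong:
  assumes eq: "\<And>w. w \<in> ball 0 r \<Longrightarrow> f w = g w" and z: "z \<in> ball 0 r" and q: "0 \<le> q" "q < 1"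
  shows "Rq q f z = Rq q g z"
proof (cases "z = 0")
  case True
  have "eventually (\<lambda>w. w \<in> ball 0 r) (nhds (0::complex))"
    using z True by (intro eventually_nhds_in_open) auto
  then have "deriv f 0 = deriv g 0" by (intro deriv_cong_ev) (auto elim!: eventually_mono simp: eq)
  then show ?thesis using True by (simp add: Rq_def)
next
  case False
  then show ?thesis using eq z of_real_mult_in_ball[OF z q(1)] q by (simp add: Rq_def)
qed

lemma Rq_scaled:
  assumes "q < 1"
  shows "f (of_real q * z) = f z - of_real (1 - q) * z * Rq q f z"
proof (cases "z = 0")
  case False
  have "complex_of_real (1 - q) \<noteq> 0" using assms by simp
  then show ?thesis using False by (simp add: Rq_def)
qed simp

lemma Rq_eqI:
  assumes "q < 1" "z \<noteq> 0" "f (of_real q * z) = f z - of_real (1 - q) * z * h"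
  shows "Rq q f z = h"
proof -
  have "complex_of_real (1 - q) \<noteq> 0" using assms(1) by simp
  then show ?thesis using assms(2,3) by (simp add: Rq_def field_simps)
qed

interpretation fs: vector_space fscale
  by unfold_locales (auto simp: fscale_def fun_eq_iff algebra_simps)

lemma fscale_apply [simp]: "fscale c f z i = c * f z i"
  by (simp add: fscale_def)

lemma sum_fun_apply: "(sum f K) z i = (\<Sum>k\<in>K. f k z i)"
  by (induction K rule: infinite_finite_induct) auto

abbreviation Rq_pow :: "real \<Rightarrow> nat \<Rightarrow> nat \<Rightarrow> (complex \<Rightarrow> complex mat) \<Rightarrow> nat \<Rightarrow> complex \<Rightarrow> complex mat" where
  "Rq_pow q n m T l \<equiv> (Rq_mat q n m ^^ l) T"

lemma Rq_pow_Suc_entry: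
  "i < n \<Longrightarrow> j < m \<Longrightarrow> Rq_pow q n m T (Suc l) z $$ (i, j) = Rq q (\<lambda>w. Rq_pow q n m T l w $$ (i, j)) z"
  by (simp add: Rq_mat_def)

lemma Rq_pow_holomorphic:
  assumes q: "0 \<le> q" "q < 1" and r: "r > 0"
    and T: "\<forall>i<n. \<forall>j<m. (\<lambda>z. T z $$ (i, j)) holomorphic_on ball 0 r"
    and ij: "i < n" "j < m"
  shows "(\<lambda>z. Rq_pow q n m T l z $$ (i, j)) holomorphic_on ball 0 r"
  using ij
proof (induction l arbitrary: i j)
  case (Suc l)
  then show ?case by (simp only: Rq_pow_Suc_entry) (intro Rq_holomorphic q r Suc.IH)
qed (use T in simp)

definition Rq_columns :: "real \<Rightarrow> real \<Rightarrow> nat \<Rightarrow> nat \<Rightarrow> (complex \<Rightarrow> complex mat) \<Rightarrow> (complex \<Rightarrow> nat \<Rightarrow> complex) set" where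
  "Rq_columns q r n m T = {col_fun r n (Rq_pow q n m T l) j | l j. j < m}"

lemma Rq_cyclic_iff_columns: "Rq_cyclic q r n m T \<longleftrightarrow> (\<exists>F. finite F \<and> Rq_columns q r n m T \<subseteq> fs.span F)"
  unfolding Rq_cyclic_def Rq_columns_def by simp

definition holomorphic_col :: "real \<Rightarrow> nat \<Rightarrow> (complex \<Rightarrow> nat \<Rightarrow> complex) \<Rightarrow> bool" where
  "holomorphic_col r n g \<longleftrightarrow>
     (\<forall>i<n. (\<lambda>z. g z i) holomorphic_on ball 0 r) \<and> (\<forall>z i. z \<notin> ball 0 r \<or> n \<le> i \<longrightarrow> g z i = 0)"

lemma holomorphic_col_span_Rq_columns:
  assumes q: "0 \<le> q" "q < 1" and r: "r > 0"
    and T: "\<forall>i<n. \<forall>j<m. (\<lambda>z. T z $$ (i, j)) holomorphic_on ball 0 r"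
    and g: "g \<in> fs.span (Rq_columns q r n m T)"
  shows "holomorphic_col r n g"
  using g
proof (induction rule: fs.span_induct_alt)
  case (step c x y)
  then obtain l j where x: "x = col_fun r n (Rq_pow q n m T l) j" "j < m"
    unfolding Rq_columns_def by auto
  have "(\<lambda>z. x z i) holomorphic_on ball 0 r" if "i < n" for i
    using Rq_pow_holomorphic[OF q r T that x(2), of l]
    by (rule holomorphic_transform) (use that in \<open>auto simp: x col_fun_def\<close>)
  then show ?case using step(2) unfolding holomorphic_col_def
    by (auto simp: x col_fun_def intro!: holomorphic_intros)
qed (simp add: holomorphic_col_def)

lemma holomorphic_col_eq_0:
  assumes g: "holomorphic_col r n g" and e: "0 < e" "e \<le> r"
    and vanish: "\<And>z i. z \<in> ball 0 e \<Longrightarrow> i < n \<Longrightarrow> g z i = 0"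
  shows "g = 0"
proof -
  have "g z i = 0" if z: "z \<in> ball 0 r" and i: "i < n" for z i
  proof (rule analytic_continuation[where f = "\<lambda>z. g z i" and S = "ball 0 r" and U = "ball 0 e" and \<xi> = 0])
    show "(\<lambda>z. g z i) holomorphic_on ball 0 r" using g i unfolding holomorphic_col_def by blast
    show "(0::complex) islimpt ball 0 e" using e(1) by (intro interior_limit_point) auto
  qed (use e z i vanish in auto)
  then have "g z i = 0" for z i
    using g unfolding holomorphic_col_def by (cases "z \<in> ball 0 r \<and> i < n") (auto simp: not_less)
  then show ?thesis by (auto simp: fun_eq_iff)
qed

definition restrict_ball :: "real \<Rightarrow> (complex \<Rightarrow> nat \<Rightarrow> complex) \<Rightarrow> complex \<Rightarrow> nat \<Rightarrow> complex" where
  "restrict_ball e g = (\<lambda>z i. if z \<in> ball 0 e then g z i else 0)"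

lemma module_hom_restrict_ball: "module_hom fscale fscale (restrict_ball e)"
  by unfold_locales (auto simp: restrict_ball_def fun_eq_iff)

text \<open>By the identity theorem, restriction to a small ball is injective on the span of the columns.\<close>
lemma Rq_cyclicI_restrict_ball:
  assumes q: "0 \<le> q" "q < 1" and r: "r > 0"
    and T: "\<forall>i<n. \<forall>j<m. (\<lambda>z. T z $$ (i, j)) holomorphic_on ball 0 r"
    and e: "0 < e" "e \<le> r" and F: "finite F"
    and restrict: "\<And>c. c \<in> Rq_columns q r n m T \<Longrightarrow> restrict_ball e c \<in> fs.span F"
  shows "Rq_cyclic q r n m T"
proof -
  let ?C = "Rq_columns q r n m T"
  obtain B where B: "B \<subseteq> ?C" "fs.independent B" "?C \<subseteq> fs.span B"
    by (rule fs.maximal_independent_subset)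
  have inj: "inj_on (restrict_ball e) (fs.span B)"
  proof (rule inj_onI)
    fix u v assume uv: "u \<in> fs.span B" "v \<in> fs.span B" "restrict_ball e u = restrict_ball e v"
    have "u - v \<in> fs.span ?C" using uv(1,2) fs.span_mono[OF B(1)] by (auto intro: fs.span_diff)
    moreover have "(u - v) z i = 0" if "z \<in> ball 0 e" for z i
      using fun_cong[OF fun_cong[OF uv(3), of z], of i] that by (simp add: restrict_ball_def)
    ultimately have "u - v = 0"
      by (intro holomorphic_col_eq_0[OF holomorphic_col_span_Rq_columns[OF q r T] e])
    then show "u = v" by simp
  qed
  have "fs.independent (restrict_ball e ` B)"
    by (rule module_hom.independent_injective_image[OF module_hom_restrict_ball B(2) inj])
  moreover have "restrict_ball e ` B \<subseteq> fs.span F" using restrict B(1) by auto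
  ultimately have "finite (restrict_ball e ` B)" using fs.independent_span_bound[OF F] by blast
  then have "finite B" using inj_on_subset[OF inj fs.span_superset] finite_image_iff by blast
  then show ?thesis using B(3) Rq_cyclic_iff_columns by blast
qed

lemma qprod_realization_scaled:
  assumes C: "C \<in> carrier_mat n N" and A: "A \<in> carrier_mat N N" and B: "B \<in> carrier_mat N m"
    and q: "0 \<le> q" "q < 1" and small: "cmod z * entry_norm A \<le> 1/2"
  shows "C * A ^\<^sub>m l * qprod q N A (of_real q * z) * B =
    C * A ^\<^sub>m l * qprod q N A z * B - (of_real (1 - q) * z) \<cdot>\<^sub>m (C * A ^\<^sub>m Suc l * qprod q N A z * B)"
proof -
  define c where "c = of_real (1 - q) * z"
  define P where "P = qprod q N A z"
  define CA where "CA = C * A ^\<^sub>m l"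
  have P: "P \<in> carrier_mat N N" using qprod_carrier[OF A q small] by (simp add: P_def)
  have CA: "CA \<in> carrier_mat n N" using C A by (simp add: CA_def)
  have AP: "A * P \<in> carrier_mat N N" using A P by simp
  have "qprod q N A (of_real q * z) = P - c \<cdot>\<^sub>m (A * P)"
    using qprod_scaled[OF A q small] one_minus_smult_mult[OF A P, of c] by (simp add: qfactor_def P_def c_def)
  then have "CA * qprod q N A (of_real q * z) * B = (CA * P - c \<cdot>\<^sub>m (CA * (A * P))) * B"
    using mult_minus_distrib_mat[OF CA P, of "c \<cdot>\<^sub>m (A * P)"] mult_smult_distrib[OF CA AP] AP by simp
  also have "\<dots> = CA * P * B - c \<cdot>\<^sub>m (CA * (A * P) * B)"
    using CA P AP B by (simp add: minus_mult_distrib_mat[of _ n N _ B m] mult_smult_assoc_mat[of _ n N B m])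
  also have "CA * (A * P) = CA * A * P" by (rule assoc_mult_mat[OF CA A P, symmetric])
  also have "CA * A = C * A ^\<^sub>m Suc l"
    using assoc_mult_mat[OF C pow_carrier_mat[OF A, of l] A] by (simp add: CA_def)
  finally show ?thesis by (simp add: CA_def P_def c_def)
qed

lemma Rq_pow_realization:
  assumes q: "0 \<le> q" "q < 1" and r: "r > 0"
    and T: "\<forall>i<n. \<forall>j<m. (\<lambda>z. T z $$ (i, j)) holomorphic_on ball 0 r"
    and C: "C \<in> carrier_mat n N" and A: "A \<in> carrier_mat N N" and B: "B \<in> carrier_mat N m"
    and e: "0 < e" "e \<le> r" and small: "\<And>z. z \<in> ball 0 e \<Longrightarrow> cmod z * entry_norm A \<le> 1/2"
    and rep: "\<And>z. z \<in> ball 0 e \<Longrightarrow> T z = C * qprod q N A z * B"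
    and z: "z \<in> ball 0 e" and ij: "i < n" "j < m"
  shows "Rq_pow q n m T l z $$ (i, j) = (C * A ^\<^sub>m l * qprod q N A z * B) $$ (i, j)"
  using z ij
proof (induction l arbitrary: z i j)
  case 0
  then show ?case using rep[OF 0(1)] C A by simp
next
  case (Suc l)
  define Y where "Y k w = (C * A ^\<^sub>m k * qprod q N A w * B) $$ (i, j)" for k w
  have Y_Suc: "Rq_pow q n m T (Suc l) w $$ (i, j) = Y (Suc l) w" if w: "w \<in> ball 0 e" "w \<noteq> 0" for w
  proof -
    have qw: "of_real q * w \<in> ball 0 e" using of_real_mult_in_ball[OF w(1)] q by simp
    have "Y l (of_real q * w) = Y l w - of_real (1 - q) * w * Y (Suc l) w"
      using qprod_realization_scaled[OF C A B q small[OF w(1)], of l] qprod_carrier[OF A q small[OF w(1)]]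
        C A B Suc.prems(2,3) by (simp add: Y_def)
    then show ?thesis
      unfolding Rq_pow_Suc_entry[OF Suc.prems(2,3)] using Suc.IH[OF qw Suc.prems(2,3)] Suc.IH[OF w(1) Suc.prems(2,3)]
      by (intro Rq_eqI q(2) w(2)) (simp add: Y_def)
  qed
  show ?case
  proof (cases "z = 0")
    case True
    have "continuous_on (ball 0 r) (\<lambda>w. Rq_pow q n m T (Suc l) w $$ (i, j))"
      by (rule holomorphic_on_imp_continuous_on[OF Rq_pow_holomorphic[OF q r T Suc.prems(2,3)]])
    then have "isCont (\<lambda>w. Rq_pow q n m T (Suc l) w $$ (i, j)) 0"
      using r by (simp add: continuous_on_eq_continuous_at[OF open_ball])
    moreover have "(Y (Suc l) \<longlongrightarrow> Y (Suc l) 0) (at 0)"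
      unfolding Y_def by (rule qprod_mult_tendsto[OF _ A _ q Suc.prems(2,3)]) (use C A B in auto)
    moreover have "eventually (\<lambda>w. Rq_pow q n m T (Suc l) w $$ (i, j) = Y (Suc l) w) (at 0)"
      using eventually_at_ball'[OF e(1), of "0::complex" UNIV] Y_Suc by (auto elim!: eventually_mono)
    ultimately have "Rq_pow q n m T (Suc l) 0 $$ (i, j) = Y (Suc l) 0" by (rule isCont_eq_limit_at)
    then show ?thesis using True by (simp add: Y_def)
  qed (use Y_Suc Suc.prems in \<open>simp add: Y_def\<close>)
qed

lemma restrict_ball_Rq_column:
  assumes q: "0 \<le> q" "q < 1" and r: "r > 0"
    and T: "\<forall>i<n. \<forall>j<m. (\<lambda>z. T z $$ (i, j)) holomorphic_on ball 0 r"
    and C: "C \<in> carrier_mat n N" and A: "A \<in> carrier_mat N N" and B: "B \<in> carrier_mat N m"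
    and e: "0 < e" "e \<le> r" and small: "\<And>z. z \<in> ball 0 e \<Longrightarrow> cmod z * entry_norm A \<le> 1/2"
    and rep: "\<And>z. z \<in> ball 0 e \<Longrightarrow> T z = C * qprod q N A z * B"
    and j: "j < m"
  shows "restrict_ball e (col_fun r n (Rq_pow q n m T l) j) =
    (\<Sum>(a, b)\<in>{..<N} \<times> {..<N}. fscale ((A ^\<^sub>m l) $$ (a, b))
       (\<lambda>z i. if z \<in> ball 0 e \<and> i < n then C $$ (i, a) * (qprod q N A z * B) $$ (b, j) else 0))"
    (is "_ = (\<Sum>(a, b)\<in>_. fscale _ (?h a b))")
proof (intro ext)
  fix z i
  show "restrict_ball e (col_fun r n (Rq_pow q n m T l) j) z i =
    (\<Sum>(a, b)\<in>{..<N} \<times> {..<N}. fscale ((A ^\<^sub>m l) $$ (a, b)) (?h a b)) z i"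
  proof (cases "z \<in> ball 0 e \<and> i < n")
    case True
    have P: "qprod q N A z \<in> carrier_mat N N" using qprod_carrier[OF A q small] True by simp
    have "restrict_ball e (col_fun r n (Rq_pow q n m T l) j) z i = (C * A ^\<^sub>m l * qprod q N A z * B) $$ (i, j)"
      using Rq_pow_realization[OF q r T C A B e small rep] True j e(2)
      by (auto simp: restrict_ball_def col_fun_def)
    also have "\<dots> = (C * A ^\<^sub>m l * (qprod q N A z * B)) $$ (i, j)"
      using C A P B by (simp add: assoc_mult_mat[of _ n N _ N B m])
    also have "\<dots> = (\<Sum>a<N. \<Sum>b<N. (A ^\<^sub>m l) $$ (a, b) * (C $$ (i, a) * (qprod q N A z * B) $$ (b, j)))"
      using C A P B True j by (intro mat_mult3_entry) auto
    also have "\<dots> = (\<Sum>(a, b)\<in>{..<N} \<times> {..<N}. fscale ((A ^\<^sub>m l) $$ (a, b)) (?h a b)) z i"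
      using True by (simp add: sum_fun_apply sum.cartesian_product split_def)
    finally show ?thesis .
  qed (auto simp: restrict_ball_def col_fun_def sum_fun_apply split_def intro!: sum.neutral)
qed

text \<open>The columns of all \<open>R\<^sub>q\<^sup>l T = C A\<^sup>l P(z) B\<close> lie, near 0, in the span of the
  \<open>N\<^sup>2 m\<close> functions \<open>C\<^sub>i\<^sub>a (P(z) B)\<^sub>b\<^sub>j\<close>.\<close>
lemma realization_imp_Rq_cyclic:
  assumes q: "0 \<le> q" "q < 1" and r: "r > 0"
    and T: "\<forall>i<n. \<forall>j<m. (\<lambda>z. T z $$ (i, j)) holomorphic_on ball 0 r"
    and C: "C \<in> carrier_mat n N" and A: "A \<in> carrier_mat N N" and B: "B \<in> carrier_mat N m"
    and eps: "0 < \<epsilon>" "\<epsilon> \<le> r"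
    and rep: "\<forall>z\<in>ball 0 \<epsilon>. \<exists>P. qprod_converges_to q N A z P \<and> T z = C * P * B"
  shows "Rq_cyclic q r n m T"
proof -
  obtain e where e: "0 < e" "e \<le> \<epsilon>" and small: "\<And>z. z \<in> ball 0 e \<Longrightarrow> cmod z * entry_norm A \<le> 1/2"
    using small_ball_exists[OF eps(1)] by blast
  have e_r: "e \<le> r" using e eps by simp
  have rep_e: "T z = C * qprod q N A z * B" if "z \<in> ball 0 e" for z
    using rep that e(2) qprod_eqI by fastforce
  define h where "h = (\<lambda>(a, b, j) z i. if z \<in> ball 0 e \<and> i < n then C $$ (i, a) * (qprod q N A z * B) $$ (b, j) else 0)"
  show ?thesis
  proof (rule Rq_cyclicI_restrict_ball[OF q r T e(1) e_r finite_imageI])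
    show "finite ({..<N} \<times> {..<N} \<times> {..<m})" by simp
    fix c assume "c \<in> Rq_columns q r n m T"
    then obtain l j where c: "c = col_fun r n (Rq_pow q n m T l) j" "j < m" by (auto simp: Rq_columns_def)
    have "restrict_ball e c = (\<Sum>(a, b)\<in>{..<N} \<times> {..<N}. fscale ((A ^\<^sub>m l) $$ (a, b)) (h (a, b, j)))"
      unfolding c(1) h_def using restrict_ball_Rq_column[OF q r T C A B e(1) e_r small rep_e c(2)] by simp
    also have "\<dots> \<in> fs.span (h ` ({..<N} \<times> {..<N} \<times> {..<m}))"
      using c(2) by (intro fs.span_sum) (auto intro!: fs.span_scale intro: fs.span_base)
    finally show "restrict_ball e c \<in> fs.span (h ` ({..<N} \<times> {..<N} \<times> {..<m}))" .
  qed
qed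

definition Rq_col :: "real \<Rightarrow> real \<Rightarrow> nat \<Rightarrow> (complex \<Rightarrow> nat \<Rightarrow> complex) \<Rightarrow> complex \<Rightarrow> nat \<Rightarrow> complex" where
  "Rq_col q r n g = (\<lambda>z i. if z \<in> ball 0 r \<and> i < n then Rq q (\<lambda>w. g w i) z else 0)"

lemma Rq_col_col_fun:
  assumes q: "0 \<le> q" "q < 1" and j: "j < m"
  shows "Rq_col q r n (col_fun r n (Rq_pow q n m T l) j) = col_fun r n (Rq_pow q n m T (Suc l)) j"
proof (intro ext)
  fix z i
  show "Rq_col q r n (col_fun r n (Rq_pow q n m T l) j) z i = col_fun r n (Rq_pow q n m T (Suc l)) j z i"
  proof (cases "z \<in> ball 0 r \<and> i < n")
    case True
    then have "Rq q (\<lambda>w. col_fun r n (Rq_pow q n m T l) j w i) z = Rq q (\<lambda>w. Rq_pow q n m T l w $$ (i, j)) z"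
      by (intro Rq_cong[OF _ _ q]) (auto simp: col_fun_def)
    then show ?thesis using True j by (simp add: Rq_col_def col_fun_def Rq_mat_def)
  qed (auto simp: Rq_col_def col_fun_def)
qed

lemma Rq_col_mem_Rq_columns:
  assumes q: "0 \<le> q" "q < 1" and c: "c \<in> Rq_columns q r n m T"
  shows "Rq_col q r n c \<in> Rq_columns q r n m T"
proof -
  obtain l j where lj: "c = col_fun r n (Rq_pow q n m T l) j" "j < m"
    using c by (auto simp: Rq_columns_def)
  then have "Rq_col q r n c = col_fun r n (Rq_pow q n m T (Suc l)) j"
    using Rq_col_col_fun[OF q lj(2), where r = r and n = n and T = T and l = l] by simp
  with lj(2) show ?thesis unfolding Rq_columns_def by blast
qed

lemma col_fun_mem_Rq_columns: "j < m \<Longrightarrow> col_fun r n T j \<in> Rq_columns q r n m T"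
  unfolding Rq_columns_def by (metis (mono_tags, lifting) funpow_0 mem_Collect_eq)

lemma Rq_cyclic_spanning_columns:
  assumes "Rq_cyclic q r n m T"
  obtains N :: nat and g where "\<And>a. a < N \<Longrightarrow> g a \<in> Rq_columns q r n m T"
    "\<And>c. c \<in> Rq_columns q r n m T \<Longrightarrow> \<exists>u. c = (\<Sum>b<N. fscale (u b) (g b))"
proof -
  let ?C = "Rq_columns q r n m T"
  obtain F where F: "finite F" "?C \<subseteq> fs.span F" using assms Rq_cyclic_iff_columns by blast
  obtain B where B: "B \<subseteq> ?C" "fs.independent B" "?C \<subseteq> fs.span B"
    by (rule fs.maximal_independent_subset)
  have "finite B" using fs.independent_span_bound[OF F(1) B(2)] B(1) F(2) by auto
  then obtain g where g: "bij_betw g {..<card B} B"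
    using ex_bij_betw_nat_finite[OF \<open>finite B\<close>] unfolding atLeast0LessThan by blast
  show thesis
  proof (rule that[of "card B" g])
    show "g a \<in> ?C" if "a < card B" for a using bij_betw_apply[OF g] that B(1) by auto
    fix c assume "c \<in> ?C"
    then have "c \<in> fs.span B" using B(3) by blast
    then obtain u where "c = (\<Sum>v\<in>B. fscale (u v) v)"
      unfolding fs.span_finite[OF \<open>finite B\<close>] by blast
    then have "c = (\<Sum>b<card B. fscale (u (g b)) (g b))"
      using sum.reindex_bij_betw[OF g, of "\<lambda>v. fscale (u v) v"] by simp
    then show "\<exists>u. c = (\<Sum>b<card B. fscale (u b) (g b))" by (rule exI[of _ "\<lambda>b. u (g b)"])
  qed
qed

lemma col_fun_sum_eq_mat_mult:
  assumes T: "T z \<in> carrier_mat n m" and z: "z \<in> ball 0 r"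
    and cols: "\<And>j. j < m \<Longrightarrow> col_fun r n T j = (\<Sum>b<N. fscale (\<beta> j b) (g b))"
  shows "T z = mat n N (\<lambda>(i, a). g a z i) * mat N m (\<lambda>(b, j). \<beta> j b)"
proof (rule eq_matI)
  fix i j assume "i < dim_row (mat n N (\<lambda>(i, a). g a z i) * mat N m (\<lambda>(b, j). \<beta> j b))"
    "j < dim_col (mat n N (\<lambda>(i, a). g a z i) * mat N m (\<lambda>(b, j). \<beta> j b))"
  then have ij: "i < n" "j < m" by auto
  have "T z $$ (i, j) = col_fun r n T j z i" using z ij by (simp add: col_fun_def)
  also have "\<dots> = (\<Sum>b<N. g b z i * \<beta> j b)" using cols[OF ij(2)] by (simp add: sum_fun_apply mult.commute)
  also have "\<dots> = (mat n N (\<lambda>(i, a). g a z i) * mat N m (\<lambda>(b, j). \<beta> j b)) $$ (i, j)"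
    by (subst mat_mult_entry[of _ n N _ m]) (use ij in auto)
  finally show "T z $$ (i, j) = (mat n N (\<lambda>(i, a). g a z i) * mat N m (\<lambda>(b, j). \<beta> j b)) $$ (i, j)" .
qed (use T in auto)

lemma Rq_col_invariant_qdifference:
  assumes q: "q < 1" and z: "z \<in> ball 0 r"
    and U: "\<And>a. a < N \<Longrightarrow> Rq_col q r n (g a) = (\<Sum>b<N. fscale (U a b) (g b))"
  shows "mat n N (\<lambda>(i, a). g a (of_real q * z) i) =
    mat n N (\<lambda>(i, a). g a z i) * qfactor q N (mat N N (\<lambda>(b, a). U a b)) z 0"
proof (rule eq_matI)
  let ?G = "mat n N (\<lambda>(i, a). g a z i)" and ?A = "mat N N (\<lambda>(b, a). U a b)"
  have G: "?G \<in> carrier_mat n N" and A: "?A \<in> carrier_mat N N" by simp_all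
  fix i a assume "i < dim_row (?G * qfactor q N ?A z 0)" "a < dim_col (?G * qfactor q N ?A z 0)"
  then have ia: "i < n" "a < N" by (auto simp: qfactor_def)
  have "Rq q (\<lambda>w. g a w i) z = (\<Sum>b<N. g b z i * U a b)"
    using fun_cong[OF fun_cong[OF U[OF ia(2)], of z], of i] z ia(1)
    by (auto simp: Rq_col_def sum_fun_apply mult.commute)
  moreover have "(?G * ?A) $$ (i, a) = (\<Sum>b<N. g b z i * U a b)"
    using mat_mult_entry[OF G A ia] ia by simp
  ultimately show "mat n N (\<lambda>(i, a). g a (of_real q * z) i) $$ (i, a) = (?G * qfactor q N ?A z 0) $$ (i, a)"
    using Rq_scaled[OF q, of "\<lambda>w. g a w i" z] mult_one_minus_smult[OF A G] ia G A
    by (simp add: qfactor_def)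
qed (simp_all add: qfactor_def)

lemma Rq_cyclic_imp_realization:
  assumes q: "0 \<le> q" "q < 1" and r: "r > 0"
    and dims: "\<forall>z\<in>ball 0 r. T z \<in> carrier_mat n m"
    and T: "\<forall>i<n. \<forall>j<m. (\<lambda>z. T z $$ (i, j)) holomorphic_on ball 0 r"
    and cyclic: "Rq_cyclic q r n m T"
  obtains N :: nat and C A B e where "C \<in> carrier_mat n N" "A \<in> carrier_mat N N" "B \<in> carrier_mat N m"
    "0 < e" "e \<le> r" "\<And>z. z \<in> ball 0 e \<Longrightarrow> cmod z * entry_norm A \<le> 1/2"
    "\<And>z. z \<in> ball 0 e \<Longrightarrow> T z = C * qprod q N A z * B"
proof -
  let ?C = "Rq_columns q r n m T"
  obtain N :: nat and g where g: "\<And>a. a < N \<Longrightarrow> g a \<in> ?C"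
    and span: "\<And>c. c \<in> ?C \<Longrightarrow> \<exists>u. c = (\<Sum>b<N. fscale (u b) (g b))"
    using Rq_cyclic_spanning_columns[OF cyclic] by blast
  obtain U where U: "\<And>a. a < N \<Longrightarrow> Rq_col q r n (g a) = (\<Sum>b<N. fscale (U a b) (g b))"
    using span[OF Rq_col_mem_Rq_columns[OF q g]] by metis
  obtain \<beta> where \<beta>: "\<And>j. j < m \<Longrightarrow> col_fun r n T j = (\<Sum>b<N. fscale (\<beta> j b) (g b))"
    using span[OF col_fun_mem_Rq_columns] by metis
  define G where "G z = mat n N (\<lambda>(i, a). g a z i)" for z
  define A where "A = mat N N (\<lambda>(b, a). U a b)"
  define B where "B = mat N m (\<lambda>(b, j). \<beta> j b)"
  have G: "G z \<in> carrier_mat n N" for z by (simp add: G_def)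
  have A: "A \<in> carrier_mat N N" and B: "B \<in> carrier_mat N m" by (simp_all add: A_def B_def)
  obtain e where e: "0 < e" "e \<le> r" and small: "\<And>z. z \<in> ball 0 e \<Longrightarrow> cmod z * entry_norm A \<le> 1/2"
    using small_ball_exists[OF r] by blast
  have G_cont: "isCont (\<lambda>w. G w $$ (i, a)) 0" if "i < n" "a < N" for i a
  proof -
    have "(\<lambda>w. g a w i) holomorphic_on ball 0 r"
      using holomorphic_col_span_Rq_columns[OF q r T fs.span_base[OF g[OF that(2)]]] that(1)
      by (simp add: holomorphic_col_def)
    then have "continuous_on (ball 0 r) (\<lambda>w. g a w i)" by (rule holomorphic_on_imp_continuous_on)
    then show ?thesis using r that by (simp add: continuous_on_eq_continuous_at[OF open_ball] G_def)
  qed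
  show thesis
  proof (rule that[OF G[of 0] A B e small])
    fix z :: complex assume z: "z \<in> ball 0 e"
    have "G z = G 0 * qprod q N A z"
      using qdifference_solution[OF A q small G _ G_cont z] Rq_col_invariant_qdifference[OF q(2) _ U] e(2)
      by (auto simp: G_def A_def)
    moreover have "T z = G z * B"
      using col_fun_sum_eq_mat_mult[OF _ _ \<beta>] dims z e(2) by (auto simp: G_def B_def)
    ultimately show "T z = G 0 * qprod q N A z * B" by simp
  qed
qed

theorem theorem4p2:
  fixes q r :: real and n m :: nat and T :: "complex \<Rightarrow> complex mat"
  assumes q: "0 \<le> q" "q < 1"
    and r: "r > 0"
    and dims: "\<forall>z\<in>ball 0 r. T z \<in> carrier_mat n m"
    and analytic: "\<forall>i<n. \<forall>j<m. (\<lambda>z. T z $$ (i, j)) holomorphic_on ball 0 r"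
  shows "Rq_cyclic q r n m T \<longleftrightarrow>
    (\<exists>N::nat. \<exists>C A B. C \<in> carrier_mat n N \<and> A \<in> carrier_mat N N \<and> B \<in> carrier_mat N m \<and>
      (\<exists>\<epsilon>>0. \<epsilon> \<le> r \<and> (\<forall>z\<in>ball 0 \<epsilon>. \<exists>P. qprod_converges_to q N A z P \<and> T z = C * P * B)))"
    (is "_ \<longleftrightarrow> ?realization")
proof
  assume "Rq_cyclic q r n m T"
  then show ?realization
  proof (rule Rq_cyclic_imp_realization[OF q r dims analytic])
    fix N :: nat and C A B e
    assume CAB: "C \<in> carrier_mat n N" "A \<in> carrier_mat N N" "B \<in> carrier_mat N m"
      and e: "0 < e" "e \<le> r" and small: "\<And>z. z \<in> ball 0 e \<Longrightarrow> cmod z * entry_norm A \<le> 1/2"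
      and rep: "\<And>z. z \<in> ball 0 e \<Longrightarrow> T z = C * qprod q N A z * B"
    have "\<forall>z\<in>ball 0 e. qprod_converges_to q N A z (qprod q N A z) \<and> T z = C * qprod q N A z * B"
      using qprod_converges[OF CAB(2) q small] rep by blast
    then show ?realization using CAB e by blast
  qed
next
  assume ?realization
  then show "Rq_cyclic q r n m T" using realization_imp_Rq_cyclic[OF q r analytic] by blast
qed

end
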